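(* Let $(\mathfrak{g},[\cdot,\cdot]_{\mathfrak{g}},\phi_{\mathfrak{g}})$ be a weakly involutive Hom-Lie algebra, $r\in\mathfrak g\otimes\mathfrak g$, and $\Delta(x)=(\mathrm{ad}_x\otimes\phi_{\mathfrak g}+\phi_{\mathfrak g}\otimes\mathrm{ad}_x)r$. Then for all $x,y\in\mathfrak g$ (juxtaposition denoting composition): (a) $\Delta(\phi_{\mathfrak g}(x))-(\phi_{\mathfrak g}\otimes\phi_{\mathfrak g})\Delta(x)=(\mathrm{ad}_{\phi_{\mathfrak g}(x)}\phi_{\mathfrak g}\otimes\phi_{\mathfrak g}-\phi_{\mathfrak g}\otimes\mathrm{ad}_{\phi_{\mathfrak g}(x)}\phi_{\mathfrak g})(\phi_{\mathfrak g}\otimes\mathrm{Id}-\mathrm{Id}\otimes\phi_{\mathfrak g})r$; (b) $(\phi_{\mathfrak g}^2\otimes\mathrm{Id})\Delta(x)-\Delta(x)=(\phi_{\mathfrak g}\otimes\mathrm{ad}_x)(\phi_{\mathfrak g}\otimes\mathrm{Id}+\mathrm{Id}\otimes\phi_{\mathfrak g})(\phi_{\mathfrak g}\otimes\mathrm{Id}-\mathrm{Id}\otimes\phi_{\mathfrak g})r$; (c) $\Delta[x,y]_{\mathfrak g}-(\mathrm{ad}_{\phi_{\mathfrak g}(x)}\Delta(y)-\mathrm{ad}_{\phi_{\mathfrak g}(y)}\Delta(x))=(\mathrm{ad}_{[x,y]_{\mathfrak g}}\phi_{\mathfrak g}\otimes\phi_{\mathfrak g}-\phi_{\mathfrak g}\otimes\mathrm{ad}_{[x,y]_{\mathfrak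 g}}\phi_{\mathfrak g})(\phi_{\mathfrak g}\otimes\mathrm{Id}-\mathrm{Id}\otimes\phi_{\mathfrak g})r$.
   Context: A Hom-Lie algebra $(\mathfrak{g},[\cdot,\cdot]_{\mathfrak{g}},\phi_{\mathfrak{g}})$: skew-symmetric bilinear bracket and linear map with $\phi_{\mathfrak g}[x,y]=[\phi_{\mathfrak g}x,\phi_{\mathfrak g}y]$ and $[\phi_{\mathfrak g}(x),[y,z]]+[\phi_{\mathfrak g}(y),[z,x]]+[\phi_{\mathfrak g}(z),[x,y]]=0$; weakly involutive if $[\phi_{\mathfrak g}^2(x),y]=[x,y]$ for all $x,y$. $\mathrm{ad}_xy=[x,y]_{\mathfrak g}$; for $z\in\mathfrak g$ and $t\in\mathfrak g\otimes\mathfrak g$, $\mathrm{ad}_zt$ means $(\mathrm{ad}_z\otimes\phi_{\mathfrak g}+\phi_{\mathfrak g}\otimes\mathrm{ad}_z)t$ (this is the meaning of $\mathrm{ad}_{\phi_{\mathfrak g}(x)}\Delta(y)$ in (c)). *)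

theory Defs
  imports Complex_Main
begin

text \<open>Elements of g \<otimes> g are represented by finite formal sums of pure tensors,
  i.e. lists of pairs (a,b) standing for the sum of the a \<otimes> b (scalars are absorbed
  into the first factor). Two such representatives denote the same element of the
  tensor product over the field iff every bilinear form takes the same value on them
  (over a field, g \<otimes> g embeds into the dual of the space of bilinear forms).\<close>

type_synonym 'v tens = "('v \<times> 'v) list"

definition tmap :: "('v \<Rightarrow> 'v) \<Rightarrow> ('v \<Rightarrow> 'v) \<Rightarrow> 'v tens \<Rightarrow> 'v tens" where
  "tmap A B t = map (\<lambda>(a, b). (A a, B b)) t"

definition tadd :: "'v tens \<Rightarrow> 'v tens \<Rightarrow> 'v tens" where
  "tadd s t = s @ t"

definition tneg :: "'v::ab_group_add tens \<Rightarrow> 'v tens" where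
  "tneg t = map (\<lambda>(a, b). (- a, b)) t"

definition tdiff :: "'v::ab_group_add tens \<Rightarrow> 'v tens \<Rightarrow> 'v tens" where
  "tdiff s t = tadd s (tneg t)"

definition bilinear_form :: "('k::field \<Rightarrow> 'v::ab_group_add \<Rightarrow> 'v) \<Rightarrow> ('v \<Rightarrow> 'v \<Rightarrow> 'k) \<Rightarrow> bool" where
  "bilinear_form scale \<beta> \<longleftrightarrow>
     (\<forall>a. Vector_Spaces.linear scale (*) (\<beta> a)) \<and> (\<forall>b. Vector_Spaces.linear scale (*) (\<lambda>a. \<beta> a b))"

definition tpair :: "('v \<Rightarrow> 'v \<Rightarrow> 'k::field) \<Rightarrow> 'v tens \<Rightarrow> 'k" where
  "tpair \<beta> t = (\<Sum>(a, b)\<leftarrow>t. \<beta> a b)"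

definition teq :: "('k::field \<Rightarrow> 'v::ab_group_add \<Rightarrow> 'v) \<Rightarrow> 'v tens \<Rightarrow> 'v tens \<Rightarrow> bool" where
  "teq scale s t \<longleftrightarrow> (\<forall>\<beta>. bilinear_form scale \<beta> \<longrightarrow> tpair \<beta> s = tpair \<beta> t)"

definition hom_lie :: "('k::field \<Rightarrow> 'v::ab_group_add \<Rightarrow> 'v) \<Rightarrow> ('v \<Rightarrow> 'v \<Rightarrow> 'v) \<Rightarrow> ('v \<Rightarrow> 'v) \<Rightarrow> bool" where
  "hom_lie scale br \<phi> \<longleftrightarrow>
     vector_space scale \<and>
     (\<forall>x. Vector_Spaces.linear scale scale (br x)) \<and>
     (\<forall>y. Vector_Spaces.linear scale scale (\<lambda>x. br x y)) \<and>
     (\<forall>x y. br x y = - br y x) \<and>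
     Vector_Spaces.linear scale scale \<phi> \<and>
     (\<forall>x y. \<phi> (br x y) = br (\<phi> x) (\<phi> y)) \<and>
     (\<forall>x y z. br (\<phi> x) (br y z) + br (\<phi> y) (br z x) + br (\<phi> z) (br x y) = 0)"

definition weakly_involutive :: "('v \<Rightarrow> 'v \<Rightarrow> 'v) \<Rightarrow> ('v \<Rightarrow> 'v) \<Rightarrow> bool" where
  "weakly_involutive br \<phi> \<longleftrightarrow> (\<forall>x y. br (\<phi> (\<phi> x)) y = br x y)"

definition adT :: "('v \<Rightarrow> 'v \<Rightarrow> 'v) \<Rightarrow> ('v \<Rightarrow> 'v) \<Rightarrow> 'v \<Rightarrow> 'v tens \<Rightarrow> 'v tens" where
  "adT br \<phi> z t = tadd (tmap (br z) \<phi> t) (tmap \<phi> (br z) t)"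

definition Delta :: "('v \<Rightarrow> 'v \<Rightarrow> 'v) \<Rightarrow> ('v \<Rightarrow> 'v) \<Rightarrow> 'v tens \<Rightarrow> 'v \<Rightarrow> 'v tens" where
  "Delta br \<phi> r x = adT br \<phi> x r"

end

theory Submission
  imports Defs
begin

text \<open>Two formal sums denote the same tensor when every bilinear form takes the same value on
  them, and pairing with a bilinear form is additive over the pure tensors of r. So each
  identity only has to be checked on a single pure tensor a \<otimes> b, where it is a direct
  computation: multiplicativity of \<phi> moves \<phi> through brackets, weak involutivity removes
  the \<phi> \<circ> \<phi> that then appears inside brackets, and in (c) the Hom-Jacobi identity,
  read as a twisted derivation rule for ad_(\<phi> x), matches the two sides.\<close>

lemma bilinear_add_neg_diff:
  assumes "\<And>a. module_hom s1 s2 (f a)" and "\<And>b. module_hom s1 s2 (\<lambda>a. f a b)"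
  shows "f (u + v) w = f u w + f v w" and "f (- u) w = - f u w" and "f (u - v) w = f u w - f v w"
    and "f w (u + v) = f w u + f w v" and "f w (- u) = - f w u" and "f w (u - v) = f w u - f w v"
  using module_hom.add[OF assms(2)] module_hom.neg[OF assms(2)] module_hom.diff[OF assms(2)]
    module_hom.add[OF assms(1)] module_hom.neg[OF assms(1)] module_hom.diff[OF assms(1)]
  by simp_all

lemma bilinear_form_add_neg_diff:
  assumes "bilinear_form scale \<beta>"
  shows "\<beta> (u + v) w = \<beta> u w + \<beta> v w" and "\<beta> (- u) w = - \<beta> u w"
    and "\<beta> (u - v) w = \<beta> u w - \<beta> v w"
    and "\<beta> w (u + v) = \<beta> w u + \<beta> w v" and "\<beta> w (- u) = - \<beta> w u"
    and "\<beta> w (u - v) = \<beta> w u - \<beta> w v"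
proof -
  have "\<And>a. module_hom scale (*) (\<beta> a)" and "\<And>b. module_hom scale (*) (\<lambda>a. \<beta> a b)"
    using assms unfolding bilinear_form_def module_hom_iff_linear by blast+
  then show "\<beta> (u + v) w = \<beta> u w + \<beta> v w" and "\<beta> (- u) w = - \<beta> u w"
    and "\<beta> (u - v) w = \<beta> u w - \<beta> v w"
    and "\<beta> w (u + v) = \<beta> w u + \<beta> w v" and "\<beta> w (- u) = - \<beta> w u"
    and "\<beta> w (u - v) = \<beta> w u - \<beta> w v"
    by (rule bilinear_add_neg_diff)+
qed

lemma sum_list_map_cong: "(\<And>p. p \<in> set xs \<Longrightarrow> f p = g p) \<Longrightarrow> (\<Sum>p\<leftarrow>xs. f p) = (\<Sum>p\<leftarrow>xs. g p)"
  by (metis map_cong)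

lemma tneg_eq_tmap: "tneg t = tmap uminus id t"
  by (simp add: tneg_def tmap_def)

lemma tmap_tmap: "tmap A B (tmap C D t) = tmap (A \<circ> C) (B \<circ> D) t"
  by (simp add: tmap_def case_prod_unfold)

lemma tmap_tadd: "tmap A B (tadd s t) = tadd (tmap A B s) (tmap A B t)"
  by (simp add: tmap_def tadd_def)

lemma tpair_tadd: "tpair \<beta> (tadd s t) = tpair \<beta> s + tpair \<beta> t"
  by (simp add: tpair_def tadd_def)

lemma tpair_tmap: "tpair \<beta> (tmap A B t) = (\<Sum>p\<leftarrow>t. \<beta> (A (fst p)) (B (snd p)))"
  by (simp add: tpair_def tmap_def case_prod_unfold comp_def)

lemmas tpair_normalize = tdiff_def tneg_eq_tmap tmap_tmap tmap_tadd tpair_tadd tpair_tmap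
  adT_def Delta_def sum_list_addf[symmetric]

context
  fixes scale :: "'k::field \<Rightarrow> 'v::ab_group_add \<Rightarrow> 'v"
    and br :: "'v \<Rightarrow> 'v \<Rightarrow> 'v" and \<phi> :: "'v \<Rightarrow> 'v"
  assumes hom_lie: "hom_lie scale br \<phi>"
begin

lemma twist_add_neg: "\<phi> (u + v) = \<phi> u + \<phi> v" "\<phi> (- u) = - \<phi> u"
  using hom_lie module_hom.add module_hom.neg
  unfolding hom_lie_def module_hom_iff_linear[symmetric] by blast+

lemma bracket_add_neg:
  "br (u + v) w = br u w + br v w" "br (- u) w = - br u w"
  "br w (u + v) = br w u + br w v" "br w (- u) = - br w u"
proof -
  have "\<And>a. module_hom scale scale (br a)" and "\<And>b. module_hom scale scale (\<lambda>a. br a b)"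
    using hom_lie unfolding hom_lie_def module_hom_iff_linear by blast+
  then show "br (u + v) w = br u w + br v w" "br (- u) w = - br u w"
    "br w (u + v) = br w u + br w v" "br w (- u) = - br w u"
    by (rule bilinear_add_neg_diff)+
qed

lemma bracket_skew: "br u v = - br v u"
  using hom_lie unfolding hom_lie_def by blast

lemma twist_bracket: "\<phi> (br u v) = br (\<phi> u) (\<phi> v)"
  using hom_lie unfolding hom_lie_def by blast

lemma hom_jacobi_derivation: "br (\<phi> x) (br y a) = br (br x y) (\<phi> a) + br (\<phi> y) (br x a)"
proof -
  have "br (\<phi> x) (br y a) + br (\<phi> y) (br a x) + br (\<phi> a) (br x y) = 0"
    using hom_lie unfolding hom_lie_def by blast
  moreover have "br (\<phi> y) (br a x) = - br (\<phi> y) (br x a)"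
    using bracket_skew[of a x] bracket_add_neg(4) by simp
  moreover have "br (\<phi> a) (br x y) = - br (br x y) (\<phi> a)"
    by (rule bracket_skew)
  ultimately show ?thesis
    by (simp add: add_eq_0_iff2 algebra_simps)
qed

context
  assumes weakly_inv: "weakly_involutive br \<phi>"
begin

lemma bracket_twist_twist: "br (\<phi> (\<phi> u)) v = br u v" "br v (\<phi> (\<phi> u)) = br v u"
  using weakly_inv bracket_skew unfolding weakly_involutive_def by metis+

lemmas hom_lie_simps = twist_add_neg bracket_add_neg twist_bracket bracket_twist_twist

lemma Delta_twist:
  fixes r :: "'v tens"
  defines "s \<equiv> tdiff (tmap \<phi> id r) (tmap id \<phi> r)"
  shows "teq scale
           (tdiff (Delta br \<phi> r (\<phi> x)) (tmap \<phi> \<phi> (Delta br \<phi> r x)))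
           (tdiff (tmap (br (\<phi> x) \<circ> \<phi>) \<phi> s) (tmap \<phi> (br (\<phi> x) \<circ> \<phi>) s))"
  unfolding teq_def s_def tpair_normalize
  by (intro allI impI sum_list_map_cong) (simp add: hom_lie_simps bilinear_form_add_neg_diff algebra_simps)

lemma Delta_twist_square:
  fixes r :: "'v tens"
  defines "s \<equiv> tdiff (tmap \<phi> id r) (tmap id \<phi> r)"
  shows "teq scale
           (tdiff (tmap (\<phi> \<circ> \<phi>) id (Delta br \<phi> r x)) (Delta br \<phi> r x))
           (tmap \<phi> (br x) (tadd (tmap \<phi> id s) (tmap id \<phi> s)))"
  unfolding teq_def s_def tpair_normalize
  by (intro allI impI sum_list_map_cong) (simp add: hom_lie_simps bilinear_form_add_neg_diff algebra_simps)

lemma Delta_bracket: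
  fixes r :: "'v tens"
  defines "s \<equiv> tdiff (tmap \<phi> id r) (tmap id \<phi> r)"
  shows "teq scale
           (tdiff (Delta br \<phi> r (br x y))
                  (tdiff (adT br \<phi> (\<phi> x) (Delta br \<phi> r y)) (adT br \<phi> (\<phi> y) (Delta br \<phi> r x))))
           (tdiff (tmap (br (br x y) \<circ> \<phi>) \<phi> s) (tmap \<phi> (br (br x y) \<circ> \<phi>) s))"
  unfolding teq_def s_def tpair_normalize
  by (intro allI impI sum_list_map_cong)
    (simp add: hom_lie_simps hom_jacobi_derivation[of x y] bilinear_form_add_neg_diff algebra_simps)

end

end

theorem lemma4p1:
  fixes scale :: "'k::field \<Rightarrow> 'v::ab_group_add \<Rightarrow> 'v"
    and br :: "'v \<Rightarrow> 'v \<Rightarrow> 'v" and \<phi> :: "'v \<Rightarrow> 'v" and r :: "'v tens"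
  assumes "hom_lie scale br \<phi>" and "weakly_involutive br \<phi>"
  defines "s \<equiv> tdiff (tmap \<phi> id r) (tmap id \<phi> r)"
  shows "(\<forall>x. teq scale
            (tdiff (Delta br \<phi> r (\<phi> x)) (tmap \<phi> \<phi> (Delta br \<phi> r x)))
            (tdiff (tmap (br (\<phi> x) \<circ> \<phi>) \<phi> s) (tmap \<phi> (br (\<phi> x) \<circ> \<phi>) s))) \<and>
         (\<forall>x. teq scale
            (tdiff (tmap (\<phi> \<circ> \<phi>) id (Delta br \<phi> r x)) (Delta br \<phi> r x))
            (tmap \<phi> (br x) (tadd (tmap \<phi> id s) (tmap id \<phi> s)))) \<and>
         (\<forall>x y. teq scale
            (tdiff (Delta br \<phi> r (br x y))
                   (tdiff (adT br \<phi> (\<phi> x) (Delta br \<phi> r y)) (adT br \<phi> (\<phi> y) (Delta br \<phi> r x))))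
            (tdiff (tmap (br (br x y) \<circ> \<phi>) \<phi> s) (tmap \<phi> (br (br x y) \<circ> \<phi>) s)))"
  using Delta_twist[OF assms(1,2)] Delta_twist_square[OF assms(1,2)] Delta_bracket[OF assms(1,2)]
  unfolding s_def by blast

end
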